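(* Let $\kappa$ be an uncountable cardinal with $\kappa^{<\kappa}=\kappa$, let $\tau$ be a relational signature of size $\leq\kappa$ with finite arities, let $G$ be a closed $\kappa$-Baire subgroup of $S_\kappa$, and let $\mathcal{F}=\{\{g(a):g\in G\}:a\in\kappa^{<\kappa}\}$ be the family of $G$-orbits of elements of $\kappa^{<\kappa}$. Then a subset of $X_\tau$ is $\kappa$-Borel and $G$-invariant if and only if it is definable in $\mathscr{L}_{\kappa^+\kappa}(\mathcal{F})$.
   Context: For a set $I$ of size $\kappa$, $2^I$ has basic open sets $U(s)=\{f\in2^I:s\subseteq f\}$ for partial functions $s$ of size $<\kappa$. The logic space is $X_\tau=\prod_{R\in\tau}2^{\kappa^{a(R)}}$ with the product of these topologies; its elements are $\tau$-structures with universe $\kappa$. $S_\kappa$ is the group of permutations of $\kappa$ with the subspace topology from $\kappa^\kappa$ (basic open sets determined by restrictions to subsets of size $<\kappa$); permutations act coordinatewise on tuples (including sequences in $\kappa^{<\kappa}$), on relations by images, and on $X_\tau$ by $R^{g(M)}=g(R^M)$. A set $A\subseteq X_\tau$ is $G$-invariant if $g(A)=A$ for all $g\in G$. The $\kappa$-Borel sets are generated from the basic open sets by unions and intersections of length $\kappa$ and complements. A subspace is $\kappa$-Baire if $\bigcap_{\alpha<\kappa}U_\alpha$ is dense in it for every sequence $\langle U_\alpha:\alpha<\kappa\rangle$ of open dense subsets of it. $\mathscr{L}_{\kappa^+\kappa}(\mathcal{F})$ is the infinitary logic with conjunctions and disjunctions of size $\leq\kappa$ and quantification over strings of fewer than $\kappa$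 variables, in signature $\tau$ plus a symbol for each orbit in $\mathcal{F}$ (a relation of arity $<\kappa$) interpreted as that fixed relation on $\kappa$. A set $A\subseteq X_\tau$ is definable if some sentence $\varphi$ satisfies $M\in A\iff M\models\varphi$ for all $M\in X_\tau$. *)

theory Defs
  imports Main
begin

text \<open>The cardinal kappa is represented by a type 'k carrying a cardinal
well-order kr (card_order kr); ordinals below kappa are the proper initial
segments underS kr alpha.  The signature tau is a type 's of relation symbols
with arity function ar :: 's => nat.\<close>

definition small :: "'k rel \<Rightarrow> 'a set \<Rightarrow> bool" where
  "small kr A \<longleftrightarrow> (card_of A, kr) \<in> ordLess"

text \<open>kappa^{<kappa}: partial maps whose domain is an ordinal below kappa.\<close>
definition kseqs :: "'k rel \<Rightarrow> ('k \<rightharpoonup> 'a) set" where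
  "kseqs kr = {a. \<exists>\<alpha>. dom a = underS kr \<alpha>}"

definition perms :: "('k \<Rightarrow> 'k) set" where
  "perms = {g. bij g}"

definition nbhd :: "('k \<Rightarrow> 'k) \<Rightarrow> 'k set \<Rightarrow> ('k \<Rightarrow> 'k) set" where
  "nbhd g A = {h \<in> perms. \<forall>x\<in>A. h x = g x}"

definition Sk_open :: "'k rel \<Rightarrow> ('k \<Rightarrow> 'k) set \<Rightarrow> bool" where
  "Sk_open kr W \<longleftrightarrow> W \<subseteq> perms \<and> (\<forall>g\<in>W. \<exists>A. small kr A \<and> nbhd g A \<subseteq> W)"

definition subgroup_Sk :: "('k \<Rightarrow> 'k) set \<Rightarrow> bool" where
  "subgroup_Sk G \<longleftrightarrow> G \<subseteq> perms \<and> id \<in> G \<and> (\<forall>g\<in>G. \<forall>h\<in>G. g \<circ> h \<in> G)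
     \<and> (\<forall>g\<in>G. inv g \<in> G)"

definition closed_Sk :: "'k rel \<Rightarrow> ('k \<Rightarrow> 'k) set \<Rightarrow> bool" where
  "closed_Sk kr G \<longleftrightarrow> G \<subseteq> perms \<and> Sk_open kr (perms - G)"

definition rel_open :: "'k rel \<Rightarrow> ('k \<Rightarrow> 'k) set \<Rightarrow> ('k \<Rightarrow> 'k) set \<Rightarrow> bool" where
  "rel_open kr G U \<longleftrightarrow> (\<exists>W. Sk_open kr W \<and> U = G \<inter> W)"

definition rel_dense :: "'k rel \<Rightarrow> ('k \<Rightarrow> 'k) set \<Rightarrow> ('k \<Rightarrow> 'k) set \<Rightarrow> bool" where
  "rel_dense kr G D \<longleftrightarrow> D \<subseteq> G \<and> (\<forall>V. rel_open kr G V \<and> V \<noteq> {} \<longrightarrow> V \<inter> D \<noteq> {})"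

definition kappa_Baire :: "'k rel \<Rightarrow> ('k \<Rightarrow> 'k) set \<Rightarrow> bool" where
  "kappa_Baire kr G \<longleftrightarrow>
     (\<forall>U :: 'k \<Rightarrow> ('k \<Rightarrow> 'k) set.
        (\<forall>i. rel_open kr G (U i) \<and> rel_dense kr G (U i)) \<longrightarrow> rel_dense kr G (\<Inter>i. U i))"

type_synonym ('s, 'k) tstruct = "'s \<Rightarrow> 'k list \<Rightarrow> bool"

definition Xtau :: "('s \<Rightarrow> nat) \<Rightarrow> ('s, 'k) tstruct set" where
  "Xtau ar = {M. \<forall>R xs. M R xs \<longrightarrow> length xs = ar R}"

definition basic_open :: "('s \<Rightarrow> nat) \<Rightarrow> ('s \<times> 'k list \<rightharpoonup> bool) \<Rightarrow> ('s, 'k) tstruct set" where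
  "basic_open ar s = {M \<in> Xtau ar. \<forall>R xs b. s (R, xs) = Some b \<longrightarrow> M R xs = b}"

definition is_basic_cond :: "'k rel \<Rightarrow> ('s \<Rightarrow> nat) \<Rightarrow> ('s \<times> 'k list \<rightharpoonup> bool) \<Rightarrow> bool" where
  "is_basic_cond kr ar s \<longleftrightarrow> small kr (dom s) \<and> (\<forall>R xs. (R, xs) \<in> dom s \<longrightarrow> length xs = ar R)"

inductive_set kBorel :: "'k rel \<Rightarrow> ('s \<Rightarrow> nat) \<Rightarrow> ('s, 'k) tstruct set set"
  for kr :: "'k rel" and ar :: "'s \<Rightarrow> nat" where
  basic: "is_basic_cond kr ar s \<Longrightarrow> basic_open ar s \<in> kBorel kr ar"
| compl: "A \<in> kBorel kr ar \<Longrightarrow> Xtau ar - A \<in> kBorel kr ar"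
| union: "(\<And>i. F i \<in> kBorel kr ar) \<Longrightarrow> (\<Union>i. F (i :: 'k)) \<in> kBorel kr ar"
| inter: "(\<And>i. F i \<in> kBorel kr ar) \<Longrightarrow> Xtau ar \<inter> (\<Inter>i. F (i :: 'k)) \<in> kBorel kr ar"

definition act :: "('k \<Rightarrow> 'k) \<Rightarrow> ('s, 'k) tstruct \<Rightarrow> ('s, 'k) tstruct" where
  "act g M = (\<lambda>R ys. \<exists>xs. M R xs \<and> ys = map g xs)"

definition invariant :: "('k \<Rightarrow> 'k) set \<Rightarrow> ('s, 'k) tstruct set \<Rightarrow> bool" where
  "invariant G A \<longleftrightarrow> (\<forall>g\<in>G. act g ` A = A)"

definition orbits :: "'k rel \<Rightarrow> ('k \<Rightarrow> 'k) set \<Rightarrow> ('k \<rightharpoonup> 'k) set set" where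
  "orbits kr G = {{map_option g \<circ> a | g. g \<in> G} | a. a \<in> kseqs kr}"

text \<open>Variables are elements of 'k (kappa many); orbit symbols are labelled by the
orbits themselves.  Conjunctions are indexed by 'k (size at most kappa, repetitions
allowed); quantifiers bind a set of fewer than kappa variables.\<close>
datatype ('s, 'k, 'v) fm =
    Rel 's "'v list"
  | Eq 'v 'v
  | Orb "('k \<rightharpoonup> 'k) set" "'k \<rightharpoonup> 'v"
  | Neg "('s, 'k, 'v) fm"
  | Conj "'k \<Rightarrow> ('s, 'k, 'v) fm"
  | Ex "'v set" "('s, 'k, 'v) fm"

primrec sat :: "('s, 'k) tstruct \<Rightarrow> ('v \<Rightarrow> 'k) \<Rightarrow> ('s, 'k, 'v) fm \<Rightarrow> bool" where
  "sat M e (Rel R xs) = M R (map e xs)"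
| "sat M e (Eq x y) = (e x = e y)"
| "sat M e (Orb Q s) = (map_option e \<circ> s \<in> Q)"
| "sat M e (Neg \<phi>) = (\<not> sat M e \<phi>)"
| "sat M e (Conj \<Phi>) = (\<forall>i. sat M e (\<Phi> i))"
| "sat M e (Ex V \<phi>) = (\<exists>e'. (\<forall>v. v \<notin> V \<longrightarrow> e' v = e v) \<and> sat M e' \<phi>)"

primrec fv :: "('s, 'k, 'v) fm \<Rightarrow> 'v set" where
  "fv (Rel R xs) = set xs"
| "fv (Eq x y) = {x, y}"
| "fv (Orb Q s) = ran s"
| "fv (Neg \<phi>) = fv \<phi>"
| "fv (Conj \<Phi>) = (\<Union>i. fv (\<Phi> i))"
| "fv (Ex V \<phi>) = fv \<phi> - V"

primrec wf :: "'k rel \<Rightarrow> ('s \<Rightarrow> nat) \<Rightarrow> ('k \<rightharpoonup> 'k) set set \<Rightarrow> ('s, 'k, 'v) fm \<Rightarrow> bool" where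
  "wf kr ar F (Rel R xs) = (length xs = ar R)"
| "wf kr ar F (Eq x y) = True"
| "wf kr ar F (Orb Q s) = (Q \<in> F \<and> (\<exists>a\<in>Q. dom s = dom a))"
| "wf kr ar F (Neg \<phi>) = wf kr ar F \<phi>"
| "wf kr ar F (Conj \<Phi>) = (\<forall>i. wf kr ar F (\<Phi> i))"
| "wf kr ar F (Ex V \<phi>) = (small kr V \<and> wf kr ar F \<phi>)"

definition sentence :: "'k rel \<Rightarrow> ('s \<Rightarrow> nat) \<Rightarrow> ('k \<rightharpoonup> 'k) set set \<Rightarrow> ('s, 'k, 'k) fm \<Rightarrow> bool" where
  "sentence kr ar F \<phi> \<longleftrightarrow> wf kr ar F \<phi> \<and> fv \<phi> = {}"

definition models :: "('s, 'k) tstruct \<Rightarrow> ('s, 'k, 'k) fm \<Rightarrow> bool" where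
  "models M \<phi> \<longleftrightarrow> (\<forall>e. sat M e \<phi>)"

definition definable :: "'k rel \<Rightarrow> ('s \<Rightarrow> nat) \<Rightarrow> ('k \<rightharpoonup> 'k) set set \<Rightarrow> ('s, 'k) tstruct set \<Rightarrow> bool" where
  "definable kr ar F A \<longleftrightarrow>
     (\<exists>\<phi>. sentence kr ar F \<phi> \<and> (\<forall>M \<in> Xtau ar. M \<in> A \<longleftrightarrow> models M \<phi>))"

end

theory Submission
  imports Defs
begin

(* By induction on formulas, the models of a formula under
   a fixed assignment form a kappa-Borel set: an existential quantifier over fewer than kappa
   variables becomes a union of length kappa, since kappa^{<kappa} = kappa.  Satisfaction is
   preserved when structure and assignment are moved by g in G, the orbit symbols being
   G-invariant; hence definable sets are invariant.

   Borel and invariant => definable (Vaught transforms).  For a structure M and a set B let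
   hit_set M B = {g in G. g^-1 M in B}.  For every kappa-Borel B we build formulas Phi D, D a
   small set of variables, such that for assignments e realizable by G on D
       M |= Phi D [e]   iff   hit_set M B is comeager in the basic open set nbhdG D e.
   Basic open sets need the kappa-Baire property of G, complements the Baire property of
   hit_set M B, intersections are conjunctions, unions follow by De Morgan.  For invariant B,
   hit_set M B is G or empty, so the sentence Phi {} defines B. *)

unbundle cardinal_syntax

section \<open>Small sets: sets of size less than kappa\<close>

locale infinite_cardinal =
  fixes kr :: "'k rel"
  assumes card_order: "card_order kr" and above_aleph0: "natLeq <o kr"
begin

lemma kr_ordIso_UNIV: "kr =o |UNIV :: 'k set|"
  using card_of_unique[OF card_order] .

lemma Card_order_kr: "Card_order kr" and Field_kr: "Field kr = UNIV"
  using card_order_on_Card_order[OF card_order] by auto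

lemma infinite_UNIV: "infinite (UNIV :: 'k set)"
proof -
  have "natLeq \<le>o |UNIV :: 'k set|"
    using ordLeq_ordIso_trans[OF ordLess_imp_ordLeq[OF above_aleph0] kr_ordIso_UNIV] .
  thus ?thesis using infinite_iff_natLeq_ordLeq by blast
qed

lemma small_iff: "small kr A \<longleftrightarrow> |A| <o |UNIV :: 'k set|"
  unfolding small_def using kr_ordIso_UNIV ordIso_symmetric ordLess_ordIso_trans by blast

lemma small_subset: "small kr B \<Longrightarrow> A \<subseteq> B \<Longrightarrow> small kr A"
  unfolding small_def using card_of_mono1 ordLeq_ordLess_trans by blast

lemma small_Un: "small kr A \<Longrightarrow> small kr B \<Longrightarrow> small kr (A \<union> B)"
  unfolding small_def
  using card_of_Un_ordLess_infinite_Field[OF _ Card_order_kr] infinite_UNIV Field_kr by auto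

lemma finite_ordLess_infinite_set: "finite A \<Longrightarrow> infinite B \<Longrightarrow> |A| <o |B|"
  using finite_ordLess_infinite[OF card_of_Well_order card_of_Well_order, of A B]
  by (simp add: Field_card_of)

lemma small_finite: "finite A \<Longrightarrow> small kr A"
  unfolding small_iff using finite_ordLess_infinite_set infinite_UNIV by blast

lemma small_image: "small kr A \<Longrightarrow> small kr (f ` A)"
  unfolding small_def using card_of_image ordLeq_ordLess_trans by blast

lemma exists_other: "\<exists>k::'k. k \<noteq> a"
  using infinite_UNIV by (metis UNIV_eq_I finite.emptyI finite_insert insertI1)

lemma small_underS: "small kr (underS kr a)"
  unfolding small_def using card_of_underS[OF Card_order_kr] Field_kr by auto

lemma small_enum: assumes "small kr D" shows "\<exists>a f. bij_betw f (underS kr a) D"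
proof -
  have W: "Well_order kr" using Card_order_kr by (simp add: card_order_on_well_order_on)
  obtain a where "a \<in> Field kr" and "|D| =o Restr kr (underS kr a)"
    using ordLess_iff_ordIso_Restr[OF W card_of_Well_order] assms unfolding small_def by blast
  then obtain f where "iso |D| (Restr kr (underS kr a)) f" unfolding ordIso_def by blast
  hence "bij_betw f D (Field (Restr kr (underS kr a)))" unfolding iso_def Field_card_of by simp
  moreover have "Field (Restr kr (underS kr a)) = underS kr a"
  proof -
    have "Refl kr" using W
      unfolding well_order_on_def linear_order_on_def partial_order_on_def preorder_on_def by simp
    thus ?thesis using Field_kr unfolding refl_on_def Field_def by blast
  qed
  ultimately show ?thesis using bij_betw_inv by metis
qed

lemma kseq_with_ran: assumes "small kr D" shows "\<exists>d \<in> kseqs kr. ran d = D"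
proof -
  obtain a f where f: "bij_betw f (underS kr a) D" using small_enum[OF assms] by blast
  define d where "d = (\<lambda>i. if i \<in> underS kr a then Some (f i) else None)"
  have "dom d = underS kr a" unfolding d_def dom_def by auto
  moreover have "ran d = f ` underS kr a" unfolding d_def ran_def by auto
  ultimately show ?thesis using f unfolding kseqs_def bij_betw_def by blast
qed

lemma small_ran_kseq: "d \<in> kseqs kr \<Longrightarrow> small kr (ran d)"
proof -
  assume "d \<in> kseqs kr"
  then obtain a where a: "dom d = underS kr a" unfolding kseqs_def by blast
  have "ran d = (\<lambda>i. the (d i)) ` dom d" unfolding ran_def dom_def by force
  thus ?thesis using a small_image[OF small_underS] by simp
qed

lemma small_surj: assumes "small kr A" shows "\<exists>f :: 'k \<Rightarrow> 'a. A \<subseteq> range f"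
proof (cases "A = {}")
  case False
  have "|A| \<le>o |UNIV :: 'k set|" using assms unfolding small_iff by (rule ordLess_imp_ordLeq)
  hence "\<exists>f :: 'k \<Rightarrow> 'a. f ` UNIV = A" by (rule card_of_ordLeq2[OF False, THEN iffD2])
  thus ?thesis by blast
qed simp

lemma small_UN_finite:
  assumes I: "small kr I" and fin: "\<And>i. i \<in> I \<Longrightarrow> finite (A i)"
  shows "small kr (\<Union>i\<in>I. A i)"
proof (cases "finite I")
  case True thus ?thesis using fin by (intro small_finite) auto
next
  case False
  have "|A i| \<le>o |I|" if "i \<in> I" for i
    using finite_ordLess_infinite_set[OF fin[OF that] False] by (rule ordLess_imp_ordLeq)
  hence "|\<Union>i\<in>I. A i| \<le>o |I|"
    using card_of_UNION_ordLeq_infinite[OF False ordLeq_refl[OF card_of_Card_order]] by blast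
  thus ?thesis using I unfolding small_def using ordLeq_ordLess_trans by blast
qed

end

section \<open>Formulas: coincidence lemma and derived connectives\<close>

lemma sat_agree:
  assumes "\<forall>v\<in>fv \<phi>. e v = e' v" and "sat M e \<phi>"
  shows "sat M e' \<phi>"
  using assms
proof (induction \<phi> arbitrary: e e')
  case (Rel R xs)
  have "map e xs = map e' xs" using Rel.prems(1) by simp
  thus ?case using Rel.prems(2) by (metis sat.simps(1))
next
  case (Orb Q s)
  have "map_option e \<circ> s = map_option e' \<circ> s"
  proof
    fix i show "(map_option e \<circ> s) i = (map_option e' \<circ> s) i"
      using Orb.prems(1) by (cases "s i") (auto simp: ran_def)
  qed
  thus ?case using Orb.prems(2) by simp
next
  case (Neg \<phi>)
  have "\<forall>v\<in>fv \<phi>. e' v = e v" using Neg.prems(1) by simp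
  thus ?case using Neg.IH[of e' e] Neg.prems(2) by auto
next
  case (Conj \<Phi>)
  have "sat M e' (\<Phi> i)" for i
  proof (rule Conj.IH)
    show "\<forall>v\<in>fv (\<Phi> i). e v = e' v" using Conj.prems(1) by auto
    show "sat M e (\<Phi> i)" using Conj.prems(2) by simp
  qed simp
  thus ?case by simp
next
  case (Ex V \<phi>)
  obtain e1 where e1: "\<forall>v. v \<notin> V \<longrightarrow> e1 v = e v" "sat M e1 \<phi>" using Ex.prems(2) by auto
  define e2 where "e2 = (\<lambda>v. if v \<in> V then e1 v else e' v)"
  have "\<forall>v\<in>fv \<phi>. e1 v = e2 v" using e1(1) Ex.prems(1) unfolding e2_def by force
  hence "sat M e2 \<phi>" using Ex.IH e1(2) by blast
  moreover have "\<forall>v. v \<notin> V \<longrightarrow> e2 v = e' v" unfolding e2_def by simp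
  ultimately show ?case by auto
qed simp

corollary sat_fv: "(\<And>v. v \<in> fv \<phi> \<Longrightarrow> e v = e' v) \<Longrightarrow> sat M e \<phi> = sat M e' \<phi>"
  using sat_agree[of \<phi> e e' M] sat_agree[of \<phi> e' e M] by auto

definition TT :: "('s, 'k, 'v) fm" where
  "TT = fm.Ex {undefined} (Eq undefined undefined)"

definition And :: "('s, 'k, 'v) fm \<Rightarrow> ('s, 'k, 'v) fm \<Rightarrow> ('s, 'k, 'v) fm" where
  "And a b = Conj (\<lambda>i. if i = undefined then a else b)"

definition Imp :: "('s, 'k, 'v) fm \<Rightarrow> ('s, 'k, 'v) fm \<Rightarrow> ('s, 'k, 'v) fm" where
  "Imp a b = Neg (And a (Neg b))"

definition All :: "'v set \<Rightarrow> ('s, 'k, 'v) fm \<Rightarrow> ('s, 'k, 'v) fm" where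
  "All V a = Neg (fm.Ex V (Neg a))"

definition literal :: "'s \<times> 'v list \<Rightarrow> bool \<Rightarrow> ('s, 'k, 'v) fm" where
  "literal p b = (if b then Rel (fst p) (snd p) else Neg (Rel (fst p) (snd p)))"

lemma sat_TT: "sat M e TT" unfolding TT_def by auto
lemma fv_TT: "fv TT = {}" unfolding TT_def by simp

lemma sat_And:
  assumes "\<exists>i::'k. i \<noteq> undefined"
  shows "sat M e (And a b :: ('s, 'k, 'v) fm) \<longleftrightarrow> sat M e a \<and> sat M e b"
proof -
  obtain k :: 'k where "k \<noteq> undefined" using assms by blast
  hence "(\<forall>i::'k. sat M e (if i = undefined then a else b)) \<longleftrightarrow> sat M e a \<and> sat M e b"
    by (metis (full_types))
  thus ?thesis unfolding And_def by simp
qed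

lemma fv_And: "fv (And a b) \<subseteq> fv a \<union> fv b" unfolding And_def by (auto split: if_splits)
lemma wf_And: "wf kr ar F a \<Longrightarrow> wf kr ar F b \<Longrightarrow> wf kr ar F (And a b)" unfolding And_def by simp

lemma sat_Imp:
  "\<exists>i::'k. i \<noteq> undefined \<Longrightarrow>
    sat M e (Imp a b :: ('s, 'k, 'v) fm) \<longleftrightarrow> (sat M e a \<longrightarrow> sat M e b)"
  unfolding Imp_def by (simp add: sat_And)

lemma fv_Imp: "fv (Imp a b) \<subseteq> fv a \<union> fv b" unfolding Imp_def using fv_And by fastforce
lemma wf_Imp: "wf kr ar F a \<Longrightarrow> wf kr ar F b \<Longrightarrow> wf kr ar F (Imp a b)"
  unfolding Imp_def by (simp add: wf_And)

lemma sat_All: "sat M e (All V a) \<longleftrightarrow> (\<forall>e'. (\<forall>v. v \<notin> V \<longrightarrow> e' v = e v) \<longrightarrow> sat M e' a)"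
  unfolding All_def by auto
lemma fv_All: "fv (All V a) = fv a - V" unfolding All_def by simp
lemma wf_All: "wf kr ar F (All V a) \<longleftrightarrow> small kr V \<and> wf kr ar F a" unfolding All_def by simp

lemma sat_literal: "sat M e (literal (R, xs) b) \<longleftrightarrow> M R (map e xs) = b"
  unfolding literal_def by simp
lemma fv_literal: "fv (literal (R, xs) b) = set xs" unfolding literal_def by simp
lemma wf_literal: "wf kr ar F (literal (R, xs) b) \<longleftrightarrow> length xs = ar R"
  unfolding literal_def by simp

lemma all_variants_iff:
  assumes "\<And>e1 e2. (\<And>x. x \<in> D \<union> A \<Longrightarrow> e1 x = e2 x) \<Longrightarrow> P e1 = P e2"
  shows "(\<forall>e'. (\<forall>v. v \<notin> A - D \<longrightarrow> e' v = e v) \<longrightarrow> P e') \<longleftrightarrow> (\<forall>e'. (\<forall>x\<in>D. e' x = e x) \<longrightarrow> P e')"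
proof
  assume H: "\<forall>e'. (\<forall>v. v \<notin> A - D \<longrightarrow> e' v = e v) \<longrightarrow> P e'"
  show "\<forall>e'. (\<forall>x\<in>D. e' x = e x) \<longrightarrow> P e'"
  proof (intro allI impI)
    fix e' assume e': "\<forall>x\<in>D. e' x = e x"
    define e'' where "e'' = (\<lambda>v. if v \<in> A - D then e' v else e v)"
    have "P e''" using H unfolding e''_def by simp
    moreover have "P e'' = P e'" by (rule assms) (use e' in \<open>auto simp: e''_def\<close>)
    ultimately show "P e'" by simp
  qed
qed auto

section \<open>The action of S_kappa on structures and on formulas\<close>

lemma act_Xtau: "M \<in> Xtau ar \<Longrightarrow> act g M \<in> Xtau ar"
  unfolding Xtau_def act_def by auto

lemma act_comp: "act g (act h M) = act (g \<circ> h) M"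
  unfolding act_def by (auto simp: fun_eq_iff)

lemma act_id: "act id M = M"
  unfolding act_def by (auto simp: fun_eq_iff)

lemma act_map: "inj g \<Longrightarrow> act g M R (map g xs) = M R xs"
  unfolding act_def by (auto dest: inj_map_eq_map[THEN iffD1, rotated])

lemma act_inv: "bij g \<Longrightarrow> act (inv g) M R xs = M R (map g xs)"
proof -
  assume b: "bij g"
  have "map g (map (inv g) ys) = ys" for ys
    using b by (simp add: bij_is_surj surj_f_inv_f map_idI)
  moreover have "map (inv g) (map g ys) = ys" for ys
    using b by (simp add: bij_is_inj map_idI)
  ultimately show ?thesis unfolding act_def by metis
qed

lemma act_act_inv: "bij g \<Longrightarrow> act g (act (inv g) M) = M"
  by (simp add: act_comp bij_is_surj surj_iff[THEN iffD1] act_id)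

lemma subgroup_bij: "subgroup_Sk G \<Longrightarrow> g \<in> G \<Longrightarrow> bij g"
  unfolding subgroup_Sk_def perms_def by auto

lemma subgroup_inv: "subgroup_Sk G \<Longrightarrow> g \<in> G \<Longrightarrow> inv g \<in> G"
  unfolding subgroup_Sk_def by auto

lemma subgroup_comp: "subgroup_Sk G \<Longrightarrow> g \<in> G \<Longrightarrow> h \<in> G \<Longrightarrow> g \<circ> h \<in> G"
  unfolding subgroup_Sk_def by auto

lemma subgroup_id: "subgroup_Sk G \<Longrightarrow> id \<in> G"
  unfolding subgroup_Sk_def by auto

lemma invariantI:
  assumes G: "subgroup_Sk G" and AX: "A \<subseteq> Xtau ar"
    and pres: "\<And>g M. g \<in> G \<Longrightarrow> M \<in> Xtau ar \<Longrightarrow> act g M \<in> A \<longleftrightarrow> M \<in> A"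
  shows "invariant G A"
  unfolding invariant_def
proof
  fix g assume g: "g \<in> G"
  show "act g ` A = A"
  proof
    show "act g ` A \<subseteq> A" using pres[OF g] AX by blast
    show "A \<subseteq> act g ` A"
    proof
      fix M assume M: "M \<in> A"
      have "act (inv g) M \<in> A"
        using pres[OF subgroup_inv[OF G g]] M AX by blast
      thus "M \<in> act g ` A" using act_act_inv[OF subgroup_bij[OF G g]] by (metis imageI)
    qed
  qed
qed

lemma invariant_act_iff:
  assumes G: "subgroup_Sk G" and inv: "invariant G A" and g: "g \<in> G"
  shows "act g M \<in> A \<longleftrightarrow> M \<in> A"
proof
  assume "act g M \<in> A"
  hence "act (inv g) (act g M) \<in> A" using inv subgroup_inv[OF G g] unfolding invariant_def by blast
  thus "M \<in> A" using subgroup_bij[OF G g]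
    by (simp add: act_comp bij_is_inj act_id)
next
  assume "M \<in> A" thus "act g M \<in> A" using inv g unfolding invariant_def by blast
qed

definition orbit :: "('k \<Rightarrow> 'k) set \<Rightarrow> ('k \<rightharpoonup> 'k) \<Rightarrow> ('k \<rightharpoonup> 'k) set" where
  "orbit G a = {map_option g \<circ> a | g. g \<in> G}"

lemma orbits_eq: "orbits kr G = orbit G ` kseqs kr"
  unfolding orbits_def orbit_def by auto

lemma orbit_translate:
  assumes G: "subgroup_Sk G" and g: "g \<in> G"
  shows "map_option g \<circ> x \<in> orbit G a \<longleftrightarrow> x \<in> orbit G a"
proof
  assume "map_option g \<circ> x \<in> orbit G a"
  then obtain h where h: "h \<in> G" "map_option g \<circ> x = map_option h \<circ> a"
    unfolding orbit_def by blast
  have "inj g" using subgroup_bij[OF G g] by (rule bij_is_inj)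
  hence "x = map_option (inv g) \<circ> (map_option g \<circ> x)"
    by (simp add: fun_eq_iff option.map_comp comp_def option.map_ident)
  also have "\<dots> = map_option (inv g \<circ> h) \<circ> a"
    using h(2) by (simp add: fun_eq_iff option.map_comp)
  finally show "x \<in> orbit G a"
    using subgroup_comp[OF G subgroup_inv[OF G g] h(1)] unfolding orbit_def by blast
next
  assume "x \<in> orbit G a"
  then obtain h where "h \<in> G" "x = map_option h \<circ> a" unfolding orbit_def by blast
  thus "map_option g \<circ> x \<in> orbit G a"
    using subgroup_comp[OF G g] unfolding orbit_def by (force simp: fun_eq_iff option.map_comp)
qed

text \<open>Truth of formulas of the logic is preserved when both the structure and the
  assignment are moved by an element of G; this is where the orbit symbols are needed.\<close>
lemma sat_act:
  assumes G: "subgroup_Sk G" and g: "g \<in> G" and w: "wf kr ar (orbits kr G) \<phi>"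
  shows "sat (act g M) (g \<circ> e) \<phi> = sat M e \<phi>"
  using w
proof (induction \<phi> arbitrary: e)
  case (Rel R xs)
  thus ?case using act_map[OF bij_is_inj[OF subgroup_bij[OF G g]], of M R "map e xs"]
    by (simp add: comp_def)
next
  case (Eq x y)
  show ?case using bij_is_inj[OF subgroup_bij[OF G g]] by (simp add: inj_eq)
next
  case (Orb Q s)
  then obtain a where Q: "Q = orbit G a" unfolding orbits_eq by auto
  have eq: "map_option (g \<circ> e) \<circ> s = map_option g \<circ> (map_option e \<circ> s)"
    by (simp add: fun_eq_iff option.map_comp)
  show ?case unfolding sat.simps Q eq by (rule orbit_translate[OF G g])
next
  case (Ex V \<phi>)
  have b: "bij g" using subgroup_bij[OF G g] .
  have IH: "sat (act g M) (g \<circ> e') \<phi> = sat M e' \<phi>" for e'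
    using Ex.IH Ex.prems by (simp add: comp_def)
  show ?case
  proof
    assume "sat (act g M) (g \<circ> e) (fm.Ex V \<phi>)"
    then obtain e' where e': "\<forall>v. v \<notin> V \<longrightarrow> e' v = g (e v)" "sat (act g M) e' \<phi>" by auto
    have "e' = g \<circ> (inv g \<circ> e')" using b by (simp add: fun_eq_iff bij_is_surj surj_f_inv_f)
    hence "sat M (inv g \<circ> e') \<phi>" using e'(2) IH by metis
    moreover have "\<forall>v. v \<notin> V \<longrightarrow> (inv g \<circ> e') v = e v" using e'(1) b by (simp add: bij_is_inj)
    ultimately show "sat M e (fm.Ex V \<phi>)" by (auto intro!: exI[of _ "inv g \<circ> e'"])
  next
    assume "sat M e (fm.Ex V \<phi>)"
    then obtain e' where "\<forall>v. v \<notin> V \<longrightarrow> e' v = e v" "sat M e' \<phi>" by auto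
    thus "sat (act g M) (g \<circ> e) (fm.Ex V \<phi>)" using IH[of e'] by (auto intro!: exI[of _ "g \<circ> e'"])
  qed
qed auto

lemma models_act:
  assumes G: "subgroup_Sk G" and g: "g \<in> G" and w: "wf kr ar (orbits kr G) \<phi>"
  shows "models (act g M) \<phi> = models M \<phi>"
proof -
  have b: "bij g" using subgroup_bij[OF G g] .
  have "sat (act g M) e \<phi> = sat M (inv g \<circ> e) \<phi>" for e
  proof -
    have "e = g \<circ> (inv g \<circ> e)" using b by (simp add: fun_eq_iff bij_is_surj surj_f_inv_f)
    thus ?thesis using sat_act[OF G g w, of M "inv g \<circ> e"] by metis
  qed
  moreover have "sat M e \<phi> = sat (act g M) (g \<circ> e) \<phi>" for e using sat_act[OF G g w] by simp
  ultimately show ?thesis unfolding models_def by metis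
qed

section \<open>Definable sets are kappa-Borel and invariant\<close>

locale kappa_power = infinite_cardinal kr for kr :: "'k rel" +
  assumes kseqs_ordIso: "|kseqs kr :: ('k \<rightharpoonup> 'k) set| =o kr"
begin

lemma kseqs_ordLeq: "|kseqs kr :: ('k \<rightharpoonup> 'k) set| \<le>o |UNIV :: 'k set|"
  using kseqs_ordIso kr_ordIso_UNIV ordIso_transitive ordIso_iff_ordLeq by blast

lemma kseqs_enum: "\<exists>ds :: 'k \<Rightarrow> ('k \<rightharpoonup> 'k). range ds = kseqs kr"
proof -
  have "kseqs kr \<noteq> ({} :: ('k \<rightharpoonup> 'k) set)"
    using kseq_with_ran[OF small_finite[of "{} :: 'k set"]] by blast
  thus ?thesis using card_of_ordLeq2[THEN iffD2, OF _ kseqs_ordLeq] by blast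
qed

text \<open>The variations of an assignment on a small set of variables can be enumerated by
  kappa; this lets an existential quantifier become a union of length kappa.\<close>
lemma variants_enum:
  fixes V :: "'v set" and e :: "'v \<Rightarrow> 'k"
  assumes "small kr V"
  shows "\<exists>h :: 'k \<Rightarrow> ('v \<Rightarrow> 'k). range h = {e'. \<forall>v. v \<notin> V \<longrightarrow> e' v = e v}"
proof -
  obtain a f where f: "bij_betw f (underS kr a) V" using small_enum[OF assms] by blast
  let ?S = "{e'. \<forall>v. v \<notin> V \<longrightarrow> e' v = e v}"
  define P where "P = (\<lambda>e'::'v \<Rightarrow> 'k. \<lambda>i. if i \<in> underS kr a then Some (e' (f i)) else None)"
  have "inj_on P ?S"
  proof (rule inj_onI, rule ext)
    fix e1 e2 v assume e1: "e1 \<in> ?S" and e2: "e2 \<in> ?S" and eq: "P e1 = P e2"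
    show "e1 v = e2 v"
    proof (cases "v \<in> V")
      case True
      then obtain i where i: "i \<in> underS kr a" "v = f i" using f unfolding bij_betw_def by blast
      have "P e1 i = P e2 i" using eq by simp
      thus ?thesis using i unfolding P_def by simp
    qed (use e1 e2 in simp)
  qed
  moreover have "P ` ?S \<subseteq> kseqs kr"
    unfolding kseqs_def P_def dom_def by auto
  ultimately have "|?S| \<le>o |kseqs kr :: ('k \<rightharpoonup> 'k) set|"
    using card_of_ordLeq[of ?S "kseqs kr :: ('k \<rightharpoonup> 'k) set"] by auto
  hence "|?S| \<le>o |UNIV :: 'k set|" using kseqs_ordLeq ordLeq_transitive by blast
  moreover have "?S \<noteq> {}" by auto
  ultimately show ?thesis using card_of_ordLeq2[of ?S "UNIV :: 'k set"] by auto
qed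

lemma Xtau_kBorel: "Xtau ar \<in> kBorel kr ar"
proof -
  have "basic_open ar Map.empty = Xtau ar" unfolding basic_open_def by auto
  moreover have "is_basic_cond kr ar Map.empty"
    unfolding is_basic_cond_def using small_finite[of "{}"] by simp
  ultimately show ?thesis using kBorel.basic by metis
qed

lemma const_kBorel: "{M \<in> Xtau ar. P} \<in> kBorel kr ar"
  using Xtau_kBorel kBorel.compl[OF Xtau_kBorel] by (cases P) simp_all

lemma sat_kBorel:
  fixes \<phi> :: "('s, 'k, 'v) fm"
  shows "wf kr ar F \<phi> \<Longrightarrow> {M \<in> Xtau ar. sat M e \<phi>} \<in> kBorel kr ar"
proof (induction \<phi> arbitrary: e)
  case (Rel R xs)
  let ?s = "[(R, map e xs) \<mapsto> True]"
  have "basic_open ar ?s = {M \<in> Xtau ar. sat M e (Rel R xs)}"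
    unfolding basic_open_def by auto
  moreover have "is_basic_cond kr ar ?s" unfolding is_basic_cond_def
    using small_finite[of "{(R, map e xs)}"] Rel by simp
  ultimately show ?case using kBorel.basic[of kr ar ?s] by simp
next
  case (Neg \<phi>)
  have "{M \<in> Xtau ar. sat M e (Neg \<phi>)} = Xtau ar - {M \<in> Xtau ar. sat M e \<phi>}" by auto
  thus ?case by (simp only:) (rule kBorel.compl, use Neg in simp)
next
  case (Conj \<Phi>)
  have "{M \<in> Xtau ar. sat M e (Conj \<Phi>)}
      = Xtau ar \<inter> (\<Inter>i. {M \<in> Xtau ar. sat M e (\<Phi> i)})"
    by auto
  thus ?case by (simp only:) (rule kBorel.inter, use Conj in simp)
next
  case (Ex V \<phi>)
  obtain h :: "'k \<Rightarrow> ('v \<Rightarrow> 'k)" where h: "range h = {e'. \<forall>v. v \<notin> V \<longrightarrow> e' v = e v}"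
    using variants_enum[of V e] Ex.prems by auto
  have "{M \<in> Xtau ar. sat M e (fm.Ex V \<phi>)} = (\<Union>i. {M \<in> Xtau ar. sat M (h i) \<phi>})"
  proof -
    have "sat M e (fm.Ex V \<phi>) \<longleftrightarrow> (\<exists>e' \<in> range h. sat M e' \<phi>)" for M using h by auto
    thus ?thesis by auto
  qed
  thus ?case by (simp only:) (rule kBorel.union, use Ex in simp)
qed (simp_all add: const_kBorel)

theorem definable_imp_kBorel_invariant:
  fixes ar :: "'s \<Rightarrow> nat"
  assumes G: "subgroup_Sk G" and d: "definable kr ar (orbits kr G) A" and AX: "A \<subseteq> Xtau ar"
  shows "A \<in> kBorel kr ar \<and> invariant G A"
proof
  obtain \<phi> where s: "sentence kr ar (orbits kr G) \<phi>"
    and A: "\<forall>M \<in> Xtau ar. M \<in> A \<longleftrightarrow> models M \<phi>"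
    using d unfolding definable_def by blast
  have w: "wf kr ar (orbits kr G) \<phi>" using s unfolding sentence_def by simp
  have "models M \<phi> \<longleftrightarrow> sat M id \<phi>" for M
    using s sat_fv[of \<phi> _ id M] unfolding models_def sentence_def by auto
  hence "A = {M \<in> Xtau ar. sat M id \<phi>}" using AX A by auto
  thus "A \<in> kBorel kr ar" using sat_kBorel[OF w] by simp
  show "invariant G A"
  proof (rule invariantI[OF G AX])
    fix g and M :: "('s, 'k) tstruct" assume "g \<in> G" "M \<in> Xtau ar"
    thus "act g M \<in> A \<longleftrightarrow> M \<in> A" using A models_act[OF G _ w] act_Xtau by metis
  qed
qed

end

section \<open>Category notions in the group G\<close>

locale Baire_group = infinite_cardinal kr for kr :: "'k rel" +
  fixes G :: "('k \<Rightarrow> 'k) set"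
  assumes subgroup: "subgroup_Sk G" and Baire: "kappa_Baire kr G"
begin

definition nbhdG :: "'k set \<Rightarrow> ('k \<Rightarrow> 'k) \<Rightarrow> ('k \<Rightarrow> 'k) set" where
  "nbhdG D e = {h \<in> G. \<forall>x\<in>D. h x = e x}"

definition realizable :: "'k set \<Rightarrow> ('k \<Rightarrow> 'k) \<Rightarrow> bool" where
  "realizable D e \<longleftrightarrow> (\<exists>g\<in>G. \<forall>x\<in>D. g x = e x)"

definition opendense :: "('k \<Rightarrow> 'k) set \<Rightarrow> bool" where
  "opendense U \<longleftrightarrow> rel_open kr G U \<and> rel_dense kr G U"

definition comeager :: "('k \<Rightarrow> 'k) set \<Rightarrow> ('k \<Rightarrow> 'k) set \<Rightarrow> bool" where
  "comeager X T \<longleftrightarrow>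
     (\<exists>U :: 'k \<Rightarrow> ('k \<Rightarrow> 'k) set. (\<forall>i. opendense (U i)) \<and> X \<inter> (\<Inter>i. U i) \<subseteq> T)"

lemma G_perms: "G \<subseteq> perms"
  using subgroup unfolding subgroup_Sk_def by blast

lemma nbhd_Sk_open: assumes "small kr A" shows "Sk_open kr (nbhd g A)"
  unfolding Sk_open_def
proof (intro conjI ballI)
  show "nbhd g A \<subseteq> perms" by (auto simp: nbhd_def)
  fix h assume "h \<in> nbhd g A"
  hence "nbhd h A \<subseteq> nbhd g A" by (auto simp: nbhd_def)
  thus "\<exists>A'. small kr A' \<and> nbhd h A' \<subseteq> nbhd g A" using assms by blast
qed

lemma nbhdG_eq: "nbhdG D e = G \<inter> nbhd e D"
  unfolding nbhdG_def nbhd_def using G_perms by blast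

lemma nbhdG_rel_open: "small kr D \<Longrightarrow> rel_open kr G (nbhdG D e)"
  unfolding rel_open_def nbhdG_eq using nbhd_Sk_open by blast

lemma nbhdG_self: "g \<in> G \<Longrightarrow> g \<in> nbhdG D g"
  unfolding nbhdG_def by simp

lemma nbhdG_subset_G: "nbhdG D e \<subseteq> G"
  unfolding nbhdG_def by blast

lemma nbhdG_empty: "nbhdG {} e = G"
  unfolding nbhdG_def by simp

lemma nbhdG_mono: "(\<And>x. x \<in> D \<Longrightarrow> e' x = e x) \<Longrightarrow> D \<subseteq> D' \<Longrightarrow> nbhdG D' e' \<subseteq> nbhdG D e"
  unfolding nbhdG_def by auto

lemma nbhdG_cong: "(\<And>x. x \<in> D \<Longrightarrow> e x = e' x) \<Longrightarrow> nbhdG D e = nbhdG D e'"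
  unfolding nbhdG_def by auto

lemma realizable_cong: "(\<And>x. x \<in> D \<Longrightarrow> e x = e' x) \<Longrightarrow> realizable D e = realizable D e'"
  unfolding realizable_def by auto

lemma realizable_iff_nonempty: "realizable D e \<longleftrightarrow> nbhdG D e \<noteq> {}"
  unfolding realizable_def nbhdG_def by auto

lemma realizable_empty: "realizable {} e"
  unfolding realizable_def using subgroup_id[OF subgroup] by blast

lemma rel_open_subset: "rel_open kr G U \<Longrightarrow> U \<subseteq> G"
  unfolding rel_open_def by blast

lemma rel_open_nbhdG:
  assumes "rel_open kr G U" and "g \<in> U"
  obtains A where "small kr A" "nbhdG A g \<subseteq> U"
proof -
  obtain W where W: "Sk_open kr W" "U = G \<inter> W" using assms(1) unfolding rel_open_def by blast
  then obtain A where "small kr A" "nbhd g A \<subseteq> W" using assms(2) unfolding Sk_open_def by blast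
  thus ?thesis using that W unfolding nbhdG_eq by blast
qed

lemma rel_openI:
  assumes sub: "U \<subseteq> G" and loc: "\<And>g. g \<in> U \<Longrightarrow> \<exists>A. small kr A \<and> nbhdG A g \<subseteq> U"
  shows "rel_open kr G U"
proof -
  define W where "W = \<Union>{nbhd g A | g A. g \<in> U \<and> small kr A \<and> nbhdG A g \<subseteq> U}"
  have "Sk_open kr W"
    unfolding Sk_open_def
  proof (intro conjI ballI)
    show "W \<subseteq> perms" unfolding W_def nbhd_def by blast
    fix h assume "h \<in> W"
    then obtain g A where gA: "g \<in> U" "small kr A" "nbhdG A g \<subseteq> U" "h \<in> nbhd g A"
      unfolding W_def by blast
    have "nbhd h A \<subseteq> nbhd g A" using gA(4) unfolding nbhd_def by auto
    also have "nbhd g A \<subseteq> W" using gA unfolding W_def by blast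
    finally show "\<exists>A. small kr A \<and> nbhd h A \<subseteq> W" using gA(2) by blast
  qed
  moreover have "U = G \<inter> W"
  proof
    show "U \<subseteq> G \<inter> W"
    proof
      fix g assume g: "g \<in> U"
      then obtain A where "small kr A" "nbhdG A g \<subseteq> U" using loc by blast
      moreover have "g \<in> nbhd g A" using g sub G_perms unfolding nbhd_def by blast
      ultimately show "g \<in> G \<inter> W" using g sub unfolding W_def by blast
    qed
    show "G \<inter> W \<subseteq> U" unfolding W_def nbhdG_eq by blast
  qed
  ultimately show ?thesis unfolding rel_open_def by blast
qed

lemma rel_open_Union: "(\<And>U. U \<in> \<U> \<Longrightarrow> rel_open kr G U) \<Longrightarrow> rel_open kr G (\<Union>\<U>)"
proof (rule rel_openI)
  assume op: "\<And>U. U \<in> \<U> \<Longrightarrow> rel_open kr G U"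
  thus "\<Union>\<U> \<subseteq> G" using rel_open_subset by blast
  fix g assume "g \<in> \<Union>\<U>"
  then obtain U where "U \<in> \<U>" "g \<in> U" by blast
  then obtain A where "small kr A" "nbhdG A g \<subseteq> U" using op rel_open_nbhdG by blast
  thus "\<exists>A. small kr A \<and> nbhdG A g \<subseteq> \<Union>\<U>" using \<open>U \<in> \<U>\<close> by blast
qed

lemma rel_denseI:
  assumes sub: "D \<subseteq> G" and meets: "\<And>g A. g \<in> G \<Longrightarrow> small kr A \<Longrightarrow> nbhdG A g \<inter> D \<noteq> {}"
  shows "rel_dense kr G D"
  unfolding rel_dense_def
proof (intro conjI sub allI impI)
  fix V assume V: "rel_open kr G V \<and> V \<noteq> {}"
  then obtain g where g: "g \<in> V" by blast
  then obtain A where A: "small kr A" "nbhdG A g \<subseteq> V" using rel_open_nbhdG V by blast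
  have "g \<in> G" using g V rel_open_subset by blast
  thus "V \<inter> D \<noteq> {}" using meets[OF _ A(1)] A(2) by blast
qed

lemma opendense_G: "opendense G"
proof -
  have "rel_open kr G G"
    by (rule rel_openI) (auto simp: nbhdG_def intro: small_finite[of "{}"])
  thus ?thesis unfolding opendense_def rel_dense_def using rel_open_subset by blast
qed

lemma comeager_subset: "X \<subseteq> T \<Longrightarrow> comeager X T"
  unfolding comeager_def using opendense_G by (intro exI[of _ "\<lambda>_. G"]) blast

lemma opendense_comeager: "opendense U \<Longrightarrow> comeager X U"
  unfolding comeager_def by (rule exI[of _ "\<lambda>_. U"]) blast

lemma comeager_mono: "comeager X T \<Longrightarrow> X' \<subseteq> X \<Longrightarrow> T \<subseteq> T' \<Longrightarrow> comeager X' T'"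
  unfolding comeager_def by blast

lemma comeager_restrict:
  assumes "comeager G C" "X \<subseteq> G" "X \<inter> C \<subseteq> T" shows "comeager X T"
proof -
  obtain U :: "'k \<Rightarrow> ('k \<Rightarrow> 'k) set" where "\<forall>i. opendense (U i)" "G \<inter> (\<Inter>i. U i) \<subseteq> C"
    using assms(1) unfolding comeager_def by blast
  moreover have "X \<inter> (\<Inter>i. U i) \<subseteq> T" using calculation(2) assms(2,3) by blast
  ultimately show ?thesis unfolding comeager_def by blast
qed

text \<open>Comeager sets are closed under intersections of length kappa, since kappa x kappa
  has size kappa.\<close>
lemma comeager_INT:
  assumes "\<And>i::'k. comeager X (T i)"
  shows "comeager X (\<Inter>i. T i)"
proof -
  have "\<forall>i. \<exists>Ui :: 'k \<Rightarrow> ('k \<Rightarrow> 'k) set. (\<forall>j. opendense (Ui j)) \<and> X \<inter> (\<Inter>j. Ui j) \<subseteq> T i"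
  proof
    fix i show "\<exists>Ui :: 'k \<Rightarrow> ('k \<Rightarrow> 'k) set. (\<forall>j. opendense (Ui j)) \<and> X \<inter> (\<Inter>j. Ui j) \<subseteq> T i"
      using assms[of i] unfolding comeager_def .
  qed
  from choice[OF this] obtain U :: "'k \<Rightarrow> 'k \<Rightarrow> ('k \<Rightarrow> 'k) set"
    where "\<forall>i. (\<forall>j. opendense (U i j)) \<and> X \<inter> (\<Inter>j. U i j) \<subseteq> T i"
    by blast
  hence U: "\<And>i j. opendense (U i j)" "\<And>i. X \<inter> (\<Inter>j. U i j) \<subseteq> T i" by auto
  have "|UNIV :: 'k set| =o |UNIV \<times> UNIV :: ('k \<times> 'k) set|"
    using card_of_Times_same_infinite[OF infinite_UNIV] by (rule ordIso_symmetric)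
  hence "\<exists>p :: 'k \<Rightarrow> 'k \<times> 'k. bij_betw p UNIV (UNIV \<times> UNIV)" by (rule card_of_ordIso[THEN iffD2])
  then obtain p :: "'k \<Rightarrow> 'k \<times> 'k" where p: "bij_betw p UNIV (UNIV \<times> UNIV)" by blast
  define U' where "U' = (\<lambda>j. U (fst (p j)) (snd (p j)))"
  have "\<forall>j. opendense (U' j)" unfolding U'_def using U(1) by simp
  moreover have "X \<inter> (\<Inter>j. U' j) \<subseteq> (\<Inter>i. T i)"
  proof
    fix g assume g: "g \<in> X \<inter> (\<Inter>j. U' j)"
    have "g \<in> U i j" for i j
    proof -
      have "(i, j) \<in> range p" using p unfolding bij_betw_def by simp
      then obtain k where k: "(i, j) = p k" by (rule rangeE)
      have "g \<in> U' k" using g by blast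
      thus ?thesis using k[symmetric] unfolding U'_def by simp
    qed
    hence "g \<in> X \<inter> (\<Inter>j. U i j)" for i using g by blast
    thus "g \<in> (\<Inter>i. T i)" using U(2) by blast
  qed
  ultimately show ?thesis unfolding comeager_def by (intro exI[of _ U'] conjI)
qed

lemma comeager_Int:
  assumes "comeager X T1" "comeager X T2"
  shows "comeager X (T1 \<inter> T2)"
proof -
  obtain k :: 'k where k: "k \<noteq> undefined" using exists_other by blast
  have "comeager X (if i = undefined then T1 else T2)" for i :: 'k using assms by simp
  hence "comeager X (\<Inter>i::'k. if i = undefined then T1 else T2)" by (rule comeager_INT)
  moreover have "(\<Inter>i::'k. if i = undefined then T1 else T2) \<subseteq> T1 \<inter> T2"
  proof
    fix x assume x: "x \<in> (\<Inter>i::'k. if i = undefined then T1 else T2)"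
    have "x \<in> (if (undefined::'k) = undefined then T1 else T2)"
      and "x \<in> (if k = undefined then T1 else T2)"
      using x by blast+
    thus "x \<in> T1 \<inter> T2" using k by simp
  qed
  ultimately show ?thesis using comeager_mono by blast
qed

lemma comeager_nonempty:
  assumes "small kr D" "realizable D e" "comeager (nbhdG D e) T"
  shows "nbhdG D e \<inter> T \<noteq> {}"
proof -
  obtain U :: "'k \<Rightarrow> ('k \<Rightarrow> 'k) set" where U: "\<forall>i. opendense (U i)" "nbhdG D e \<inter> (\<Inter>i. U i) \<subseteq> T"
    using assms(3) unfolding comeager_def by blast
  have "rel_dense kr G (\<Inter>i. U i)"
    using Baire U(1) unfolding kappa_Baire_def opendense_def by blast
  moreover have "rel_open kr G (nbhdG D e)" "nbhdG D e \<noteq> {}"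
    using nbhdG_rel_open assms(1,2) realizable_iff_nonempty by auto
  ultimately have "nbhdG D e \<inter> (\<Inter>i. U i) \<noteq> {}" unfolding rel_dense_def by blast
  thus ?thesis using U(2) by blast
qed

lemma not_comeager_empty: "small kr D \<Longrightarrow> realizable D e \<Longrightarrow> \<not> comeager (nbhdG D e) {}"
  using comeager_nonempty by blast

end

section \<open>The Baire property and the sets of group elements moving a structure into B\<close>

definition holds_cond :: "('s, 'k) tstruct \<Rightarrow> ('s \<times> 'k list \<rightharpoonup> bool) \<Rightarrow> ('k \<Rightarrow> 'k) \<Rightarrow> bool" where
  "holds_cond M s g \<longleftrightarrow> (\<forall>R xs b. s (R, xs) = Some b \<longrightarrow> M R (map g xs) = b)"

definition cond_vars :: "('s \<times> 'k list \<rightharpoonup> bool) \<Rightarrow> 'k set" where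
  "cond_vars s = (\<Union>p\<in>dom s. set (snd p))"

lemma (in infinite_cardinal) small_cond_vars: "is_basic_cond kr ar s \<Longrightarrow> small kr (cond_vars s)"
  unfolding cond_vars_def is_basic_cond_def by (rule small_UN_finite) auto

lemma holds_cond_cong:
  assumes "\<And>x. x \<in> cond_vars s \<Longrightarrow> g x = g' x" shows "holds_cond M s g = holds_cond M s g'"
proof -
  have "map g xs = map g' xs" if "(R, xs) \<in> dom s" for R xs
    using that assms by (force simp: cond_vars_def)
  thus ?thesis unfolding holds_cond_def by (metis domI)
qed

lemma kBorel_subset: "B \<in> kBorel kr ar \<Longrightarrow> B \<subseteq> Xtau ar"
  by (induction rule: kBorel.induct) (auto simp: basic_open_def)

context Baire_group
begin

definition has_BP :: "('k \<Rightarrow> 'k) set \<Rightarrow> bool" where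
  "has_BP T \<longleftrightarrow> (\<exists>U C. rel_open kr G U \<and> comeager G C \<and> (\<forall>g\<in>G \<inter> C. g \<in> T \<longleftrightarrow> g \<in> U))"

lemma BP_rel_open: "rel_open kr G T \<Longrightarrow> has_BP T"
  unfolding has_BP_def using comeager_subset[of G G] by blast

definition exterior :: "('k \<Rightarrow> 'k) set \<Rightarrow> ('k \<Rightarrow> 'k) set" where
  "exterior U = {g \<in> G. \<exists>A. small kr A \<and> nbhdG A g \<inter> U = {}}"

lemma exterior_disjoint: "exterior U \<inter> U = {}"
  unfolding exterior_def using nbhdG_self by blast

lemma exterior_rel_open: "rel_open kr G (exterior U)"
proof (rule rel_openI)
  show "exterior U \<subseteq> G" unfolding exterior_def by blast
  fix g assume "g \<in> exterior U"
  then obtain A where A: "g \<in> G" "small kr A" "nbhdG A g \<inter> U = {}"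
    unfolding exterior_def by blast
  have "nbhdG A g \<subseteq> exterior U"
  proof
    fix h assume h: "h \<in> nbhdG A g"
    hence "nbhdG A h = nbhdG A g" unfolding nbhdG_def by auto
    thus "h \<in> exterior U" using A h nbhdG_subset_G unfolding exterior_def by blast
  qed
  thus "\<exists>A. small kr A \<and> nbhdG A g \<subseteq> exterior U" using A(2) by blast
qed

lemma opendense_Un_exterior:
  assumes U: "rel_open kr G U" shows "opendense (U \<union> exterior U)"
  unfolding opendense_def
proof
  show "rel_open kr G (U \<union> exterior U)"
    using rel_open_Union[of "{U, exterior U}"] U exterior_rel_open by auto
  show "rel_dense kr G (U \<union> exterior U)"
  proof (rule rel_denseI)
    show "U \<union> exterior U \<subseteq> G" using rel_open_subset[OF U] unfolding exterior_def by blast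
    fix g and A :: "'k set" assume "g \<in> G" "small kr A"
    thus "nbhdG A g \<inter> (U \<union> exterior U) \<noteq> {}"
      using nbhdG_self unfolding exterior_def by blast
  qed
qed

lemma BP_compl:
  assumes "has_BP T" shows "has_BP (G - T)"
proof -
  obtain U C where UC: "rel_open kr G U" "comeager G C" "\<forall>g\<in>G \<inter> C. g \<in> T \<longleftrightarrow> g \<in> U"
    using assms unfolding has_BP_def by blast
  have "comeager G (C \<inter> (U \<union> exterior U))"
    using comeager_Int[OF UC(2) opendense_comeager[OF opendense_Un_exterior[OF UC(1)]]] .
  moreover have "\<forall>g\<in>G \<inter> (C \<inter> (U \<union> exterior U)). g \<in> G - T \<longleftrightarrow> g \<in> exterior U"
    using UC(3) exterior_disjoint by blast
  ultimately show ?thesis unfolding has_BP_def using exterior_rel_open by blast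
qed

lemma BP_UN:
  assumes "\<And>i::'k. has_BP (T i)" shows "has_BP (\<Union>i. T i)"
proof -
  have "\<forall>i. \<exists>U C. rel_open kr G U \<and> comeager G C \<and> (\<forall>g\<in>G \<inter> C. g \<in> T i \<longleftrightarrow> g \<in> U)"
    using assms unfolding has_BP_def by blast
  from choice[OF this] obtain U where
    "\<forall>i. \<exists>C. rel_open kr G (U i) \<and> comeager G C \<and> (\<forall>g\<in>G \<inter> C. g \<in> T i \<longleftrightarrow> g \<in> U i)"
    by blast
  from choice[OF this] obtain C where
    UC: "\<forall>i. rel_open kr G (U i) \<and> comeager G (C i) \<and> (\<forall>g\<in>G \<inter> C i. g \<in> T i \<longleftrightarrow> g \<in> U i)"
    by blast
  have "rel_open kr G (\<Union>i. U i)" using UC by (intro rel_open_Union) auto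
  moreover have "comeager G (\<Inter>i. C i)" using UC by (intro comeager_INT) simp
  moreover have "\<forall>g\<in>G \<inter> (\<Inter>i. C i). g \<in> (\<Union>i. T i) \<longleftrightarrow> g \<in> (\<Union>i. U i)"
    using UC by blast
  ultimately show ?thesis unfolding has_BP_def by blast
qed

lemma BP_INT:
  assumes "\<And>i::'k. has_BP (T i)" shows "has_BP (G \<inter> (\<Inter>i. T i))"
proof -
  have "G \<inter> (\<Inter>i. T i) = G - (\<Union>i. G - T i)" by blast
  thus ?thesis using BP_compl[OF BP_UN[OF BP_compl[OF assms]]] by simp
qed

text \<open>The elements g of G with g^{-1} M in B.  For a basic open set B this is open, so by
  induction it has the Baire property whenever B is kappa-Borel.\<close>
definition hit_set :: "('s, 'k) tstruct \<Rightarrow> ('s, 'k) tstruct set \<Rightarrow> ('k \<Rightarrow> 'k) set" where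
  "hit_set M B = {g \<in> G. act (inv g) M \<in> B}"

lemma hit_set_compl: "M \<in> Xtau ar \<Longrightarrow> hit_set M (Xtau ar - B) = G - hit_set M B"
  unfolding hit_set_def using act_Xtau by blast

lemma hit_set_UN: "hit_set M (\<Union>i. F i) = (\<Union>i. hit_set M (F i))"
  unfolding hit_set_def by blast

lemma hit_set_INT: "M \<in> Xtau ar \<Longrightarrow> hit_set M (Xtau ar \<inter> (\<Inter>i. F i)) = G \<inter> (\<Inter>i. hit_set M (F i))"
  unfolding hit_set_def using act_Xtau by blast

lemma hit_set_basic:
  assumes M: "M \<in> Xtau ar" shows "hit_set M (basic_open ar s) = {g \<in> G. holds_cond M s g}"
proof -
  have "act (inv g) M \<in> basic_open ar s \<longleftrightarrow> holds_cond M s g" if g: "g \<in> G" for g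
    using act_Xtau[OF M] act_inv[OF subgroup_bij[OF subgroup g], of M]
    unfolding basic_open_def holds_cond_def by simp
  thus ?thesis unfolding hit_set_def by blast
qed

lemma hit_set_basic_rel_open:
  assumes M: "M \<in> Xtau ar" and s: "is_basic_cond kr ar s"
  shows "rel_open kr G (hit_set M (basic_open ar s))"
  unfolding hit_set_basic[OF M]
proof (rule rel_openI)
  fix g assume g: "g \<in> {g \<in> G. holds_cond M s g}"
  have "nbhdG (cond_vars s) g \<subseteq> {g \<in> G. holds_cond M s g}"
  proof
    fix h assume h: "h \<in> nbhdG (cond_vars s) g"
    hence "holds_cond M s h = holds_cond M s g" by (intro holds_cond_cong) (auto simp: nbhdG_def)
    thus "h \<in> {g \<in> G. holds_cond M s g}" using g h unfolding nbhdG_def by blast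
  qed
  thus "\<exists>A. small kr A \<and> nbhdG A g \<subseteq> {g \<in> G. holds_cond M s g}"
    using small_cond_vars[OF s] by blast
qed blast

lemma BP_hit_set: "B \<in> kBorel kr ar \<Longrightarrow> M \<in> Xtau ar \<Longrightarrow> has_BP (hit_set M B)"
proof (induction arbitrary: M rule: kBorel.induct)
  case (basic s) thus ?case using hit_set_basic_rel_open BP_rel_open by blast
next
  case (compl A) thus ?case using hit_set_compl BP_compl by metis
next
  case (union F) thus ?case unfolding hit_set_UN by (intro BP_UN) blast
next
  case (inter F) thus ?case unfolding hit_set_INT[OF inter.prems] by (intro BP_INT) blast
qed

end

section \<open>Comeagerness in basic open sets\<close>

context Baire_group
begin

lemma comeager_local_iff:
  assumes D: "small kr D" and E: "small kr E"
    and loc: "\<And>g g'. (\<And>x. x \<in> E \<Longrightarrow> g x = g' x) \<Longrightarrow> P g = P g'"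
  shows "comeager (nbhdG D e) {g \<in> G. P g} \<longleftrightarrow>
    (\<forall>e'. (\<forall>x\<in>D. e' x = e x) \<longrightarrow> realizable (D \<union> E) e' \<longrightarrow> P e')"
proof
  assume C: "comeager (nbhdG D e) {g \<in> G. P g}"
  show "\<forall>e'. (\<forall>x\<in>D. e' x = e x) \<longrightarrow> realizable (D \<union> E) e' \<longrightarrow> P e'"
  proof (intro allI impI)
    fix e' assume e': "\<forall>x\<in>D. e' x = e x" and re: "realizable (D \<union> E) e'"
    have "nbhdG (D \<union> E) e' \<subseteq> nbhdG D e" by (rule nbhdG_mono) (use e' in auto)
    hence "comeager (nbhdG (D \<union> E) e') {g \<in> G. P g}" using C comeager_mono by blast
    then obtain k where k: "k \<in> nbhdG (D \<union> E) e'" "P k"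
      using comeager_nonempty[OF small_Un[OF D E] re] by blast
    have "P k = P e'" by (rule loc) (use k(1) in \<open>auto simp: nbhdG_def\<close>)
    thus "P e'" using k(2) by simp
  qed
next
  assume H: "\<forall>e'. (\<forall>x\<in>D. e' x = e x) \<longrightarrow> realizable (D \<union> E) e' \<longrightarrow> P e'"
  have "nbhdG D e \<subseteq> {g \<in> G. P g}"
  proof
    fix g assume "g \<in> nbhdG D e"
    hence "g \<in> G" "\<forall>x\<in>D. g x = e x" unfolding nbhdG_def by auto
    moreover from \<open>g \<in> G\<close> have "realizable (D \<union> E) g" unfolding realizable_def by blast
    ultimately show "g \<in> {g \<in> G. P g}" using H by blast
  qed
  thus "comeager (nbhdG D e) {g \<in> G. P g}" by (rule comeager_subset)
qed

text \<open>If T has the Baire property and G - T is not comeager in nbhdG D e, then T is comeager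
  in a smaller nonempty basic open set: the set U of the Baire property meets nbhdG D e.\<close>
lemma BP_comeager_somewhere:
  assumes BP: "has_BP T" and nC: "\<not> comeager (nbhdG D e) (G - T)"
  obtains h A where "h \<in> nbhdG D e" "small kr A" "comeager (nbhdG (D \<union> A) h) T"
proof -
  obtain U C where UC: "rel_open kr G U" "comeager G C" "\<forall>g\<in>G \<inter> C. g \<in> T \<longleftrightarrow> g \<in> U"
    using BP unfolding has_BP_def by blast
  have "U \<inter> nbhdG D e \<noteq> {}"
  proof
    assume "U \<inter> nbhdG D e = {}"
    hence "nbhdG D e \<inter> C \<subseteq> G - T" using UC(3) nbhdG_subset_G by blast
    thus False using nC comeager_restrict[OF UC(2) nbhdG_subset_G] by blast
  qed
  then obtain h where h: "h \<in> U" "h \<in> nbhdG D e" by blast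
  then obtain A where A: "small kr A" "nbhdG A h \<subseteq> U" using rel_open_nbhdG[OF UC(1)] by blast
  have "nbhdG (D \<union> A) h \<subseteq> nbhdG A h" by (rule nbhdG_mono) auto
  hence "nbhdG (D \<union> A) h \<inter> C \<subseteq> T" using A(2) UC(3) nbhdG_subset_G by blast
  hence "comeager (nbhdG (D \<union> A) h) T" using comeager_restrict[OF UC(2) nbhdG_subset_G] by blast
  thus ?thesis using that h(2) A(1) by blast
qed

lemma comeager_compl_iff:
  assumes BP: "has_BP T" and D: "small kr D"
  shows "comeager (nbhdG D e) (G - T) \<longleftrightarrow>
    (\<forall>A. small kr A \<longrightarrow> (\<forall>e'. (\<forall>x\<in>D. e' x = e x) \<longrightarrow> realizable (D \<union> A) e' \<longrightarrow>
       \<not> comeager (nbhdG (D \<union> A) e') T))"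
proof
  assume C: "comeager (nbhdG D e) (G - T)"
  show "\<forall>A. small kr A \<longrightarrow> (\<forall>e'. (\<forall>x\<in>D. e' x = e x) \<longrightarrow> realizable (D \<union> A) e' \<longrightarrow>
       \<not> comeager (nbhdG (D \<union> A) e') T)"
  proof (intro allI impI notI)
    fix A e' assume A: "small kr A" and e': "\<forall>x\<in>D. e' x = e x" and re: "realizable (D \<union> A) e'"
      and CT: "comeager (nbhdG (D \<union> A) e') T"
    have "nbhdG (D \<union> A) e' \<subseteq> nbhdG D e" by (rule nbhdG_mono) (use e' in auto)
    hence "comeager (nbhdG (D \<union> A) e') (G - T)" using C comeager_mono by blast
    hence "comeager (nbhdG (D \<union> A) e') (T \<inter> (G - T))" by (rule comeager_Int[OF CT])
    hence "comeager (nbhdG (D \<union> A) e') {}" using comeager_mono by blast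
    thus False using not_comeager_empty[OF small_Un[OF D A] re] by blast
  qed
next
  assume H: "\<forall>A. small kr A \<longrightarrow> (\<forall>e'. (\<forall>x\<in>D. e' x = e x) \<longrightarrow> realizable (D \<union> A) e' \<longrightarrow>
       \<not> comeager (nbhdG (D \<union> A) e') T)"
  show "comeager (nbhdG D e) (G - T)"
  proof (rule ccontr)
    assume "\<not> comeager (nbhdG D e) (G - T)"
    with BP obtain h A where h: "h \<in> nbhdG D e" and A: "small kr A"
      and CT: "comeager (nbhdG (D \<union> A) h) T"
      by (rule BP_comeager_somewhere)
    have "\<forall>x\<in>D. h x = e x" and "realizable (D \<union> A) h"
      using h unfolding nbhdG_def realizable_def by auto
    thus False using H A CT by blast
  qed
qed

end

section \<open>Vaught transforms of kappa-Borel sets\<close>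

definition cond_fm :: "('s \<times> 'k list \<rightharpoonup> bool) \<Rightarrow> ('k \<Rightarrow> 's \<times> 'k list) \<Rightarrow> ('s, 'k, 'k) fm" where
  "cond_fm s f = Conj (\<lambda>i. if f i \<in> dom s then literal (f i) (the (s (f i))) else TT)"

lemma sat_cond_fm:
  assumes f: "dom s \<subseteq> range f" shows "sat M e (cond_fm s f) \<longleftrightarrow> holds_cond M s e"
proof
  assume H: "sat M e (cond_fm s f)"
  show "holds_cond M s e" unfolding holds_cond_def
  proof (intro allI impI)
    fix R xs b assume sb: "s (R, xs) = Some b"
    then obtain i where i: "f i = (R, xs)" using f by (metis domI rangeE subsetD)
    have "sat M e (if f i \<in> dom s then literal (f i) (the (s (f i))) else TT)"
      using H unfolding cond_fm_def by simp
    thus "M R (map e xs) = b" using i sb by (simp add: domI sat_literal)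
  qed
next
  assume H: "holds_cond M s e"
  have "sat M e (if f i \<in> dom s then literal (f i) (the (s (f i))) else TT)" for i
  proof (cases "f i \<in> dom s")
    case True
    then obtain R xs b where "f i = (R, xs)" "s (R, xs) = Some b" by (cases "f i") auto
    thus ?thesis using H unfolding holds_cond_def by (simp add: sat_literal domI)
  qed (simp add: sat_TT)
  thus "sat M e (cond_fm s f)" unfolding cond_fm_def by simp
qed

lemma fv_cond_fm: "fv (cond_fm s f) \<subseteq> cond_vars s"
proof -
  have "fv (if f i \<in> dom s then literal (f i) (the (s (f i))) else TT) \<subseteq> cond_vars s" for i
  proof (cases "f i \<in> dom s")
    case True
    then obtain R xs where Rxs: "f i = (R, xs)" "(R, xs) \<in> dom s" by (cases "f i") auto
    have "set xs \<subseteq> cond_vars s" using Rxs(2) unfolding cond_vars_def by force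
    thus ?thesis using Rxs by (simp add: fv_literal)
  qed (simp add: fv_TT)
  thus ?thesis unfolding cond_fm_def by auto
qed

lemma (in infinite_cardinal) wf_cond_fm: "is_basic_cond kr ar s \<Longrightarrow> wf kr ar F (cond_fm s f)"
proof -
  assume s: "is_basic_cond kr ar s"
  have "wf kr ar F (if f i \<in> dom s then literal (f i) (the (s (f i))) else TT)" for i
  proof (cases "f i \<in> dom s")
    case True
    then obtain R xs where "f i = (R, xs)" "(R, xs) \<in> dom s" by (cases "f i") auto
    thus ?thesis using s unfolding is_basic_cond_def by (simp add: wf_literal)
  next
    case False
    thus ?thesis using small_finite[of "{undefined}"] unfolding TT_def by simp
  qed
  thus ?thesis unfolding cond_fm_def by simp
qed

lemma map_option_comp_eq_iff:
  "map_option e \<circ> d = map_option g \<circ> d \<longleftrightarrow> (\<forall>x\<in>ran d. g x = e x)"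
proof
  assume eq: "map_option e \<circ> d = map_option g \<circ> d"
  show "\<forall>x\<in>ran d. g x = e x"
  proof
    fix x assume "x \<in> ran d"
    then obtain i where "d i = Some x" unfolding ran_def by blast
    thus "g x = e x" using fun_cong[OF eq, of i] by simp
  qed
next
  assume H: "\<forall>x\<in>ran d. g x = e x"
  show "map_option e \<circ> d = map_option g \<circ> d"
  proof
    fix i show "(map_option e \<circ> d) i = (map_option g \<circ> d) i"
      using H by (cases "d i") (auto simp: ran_def)
  qed
qed

locale Vaught_setting = kappa_power kr + Baire_group kr G
  for kr :: "'k rel" and G :: "('k \<Rightarrow> 'k) set"
begin

text \<open>realize_fm D says that the assignment restricted to D is realized by an element of G;
  it is the orbit symbol applied to a fixed enumeration of D.\<close>
definition enum_seq :: "'k set \<Rightarrow> ('k \<rightharpoonup> 'k)" where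
  "enum_seq D = (SOME d. d \<in> kseqs kr \<and> ran d = D)"

lemma enum_seq: "small kr D \<Longrightarrow> enum_seq D \<in> kseqs kr \<and> ran (enum_seq D) = D"
  unfolding enum_seq_def using kseq_with_ran someI_ex by (metis (mono_tags, lifting))

definition realize_fm :: "'k set \<Rightarrow> ('s, 'k, 'k) fm" where
  "realize_fm D = Orb (orbit G (enum_seq D)) (enum_seq D)"

lemma fv_realize_fm: "small kr D \<Longrightarrow> fv (realize_fm D) = D"
  unfolding realize_fm_def using enum_seq by simp

lemma wf_realize_fm: assumes D: "small kr D" shows "wf kr ar (orbits kr G) (realize_fm D)"
proof -
  have "map_option id \<circ> enum_seq D \<in> orbit G (enum_seq D)"
    using subgroup_id[OF subgroup] unfolding orbit_def by blast
  hence "enum_seq D \<in> orbit G (enum_seq D)" by (simp add: option.map_id0)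
  moreover have "orbit G (enum_seq D) \<in> orbits kr G" using enum_seq[OF D] unfolding orbits_eq by blast
  ultimately show ?thesis unfolding realize_fm_def by auto
qed

lemma sat_realize_fm: assumes "small kr D" shows "sat M e (realize_fm D) \<longleftrightarrow> realizable D e"
proof -
  have "sat M e (realize_fm D) \<longleftrightarrow> (\<exists>g\<in>G. map_option e \<circ> enum_seq D = map_option g \<circ> enum_seq D)"
    unfolding realize_fm_def orbit_def by auto
  moreover have "ran (enum_seq D) = D" using enum_seq[OF assms] by simp
  ultimately show ?thesis unfolding map_option_comp_eq_iff realizable_def by simp
qed

definition kseq_enum :: "'k \<Rightarrow> ('k \<rightharpoonup> 'k)" where
  "kseq_enum = (SOME ds. range ds = kseqs kr)"

lemma range_kseq_enum: "range kseq_enum = kseqs kr"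
  unfolding kseq_enum_def by (rule someI_ex[OF kseqs_enum])

definition small_set :: "'k \<Rightarrow> 'k set" where
  "small_set i = ran (kseq_enum i)"

lemma small_set_small: "small kr (small_set i)"
  unfolding small_set_def by (rule small_ran_kseq) (use range_kseq_enum in blast)

lemma small_set_surj: assumes "small kr A" obtains i where "small_set i = A"
proof -
  obtain d where d: "d \<in> kseqs kr" "ran d = A" using kseq_with_ran[OF assms] by blast
  then obtain i where "d = kseq_enum i" using range_kseq_enum by blast
  thus ?thesis using that d(2) unfolding small_set_def by blast
qed

lemma all_small_set_iff: "(\<forall>i. P (small_set i)) \<longleftrightarrow> (\<forall>A. small kr A \<longrightarrow> P A)"
proof
  assume H: "\<forall>i. P (small_set i)"
  show "\<forall>A. small kr A \<longrightarrow> P A"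
  proof (intro allI impI)
    fix A :: "'k set" assume "small kr A"
    then obtain i where "small_set i = A" by (rule small_set_surj)
    thus "P A" using H by blast
  qed
qed (use small_set_small in blast)

definition vaught_transform :: "('s \<Rightarrow> nat) \<Rightarrow> ('s, 'k) tstruct set \<Rightarrow> ('k set \<Rightarrow> ('s, 'k, 'k) fm) \<Rightarrow> bool" where
  "vaught_transform ar B \<Phi> \<longleftrightarrow>
     (\<forall>D. small kr D \<longrightarrow> wf kr ar (orbits kr G) (\<Phi> D) \<and> fv (\<Phi> D) \<subseteq> D) \<and>
     (\<forall>M\<in>Xtau ar. \<forall>D e. small kr D \<longrightarrow> realizable D e \<longrightarrow>
        (sat M e (\<Phi> D) \<longleftrightarrow> comeager (nbhdG D e) (hit_set M B)))"

lemma vaught_transformI: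
  assumes "\<And>D. small kr D \<Longrightarrow> wf kr ar (orbits kr G) (\<Phi> D)"
    and "\<And>D. small kr D \<Longrightarrow> fv (\<Phi> D) \<subseteq> D"
    and "\<And>M D e. M \<in> Xtau ar \<Longrightarrow> small kr D \<Longrightarrow> realizable D e \<Longrightarrow>
           sat M e (\<Phi> D) \<longleftrightarrow> comeager (nbhdG D e) (hit_set M B)"
  shows "vaught_transform ar B \<Phi>"
  using assms unfolding vaught_transform_def by blast

lemma vaught_transform_wf:
  "vaught_transform ar B \<Phi> \<Longrightarrow> small kr D \<Longrightarrow> wf kr ar (orbits kr G) (\<Phi> D) \<and> fv (\<Phi> D) \<subseteq> D"
  unfolding vaught_transform_def by blast

lemma vaught_transform_sat:
  "vaught_transform ar B \<Phi> \<Longrightarrow> M \<in> Xtau ar \<Longrightarrow> small kr D \<Longrightarrow> realizable D e \<Longrightarrow>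
    sat M e (\<Phi> D) \<longleftrightarrow> comeager (nbhdG D e) (hit_set M B)"
  unfolding vaught_transform_def by blast

definition basic_transform ::
  "('s \<times> 'k list \<rightharpoonup> bool) \<Rightarrow> ('k \<Rightarrow> 's \<times> 'k list) \<Rightarrow> 'k set \<Rightarrow> ('s, 'k, 'k) fm" where
  "basic_transform s f D = All (cond_vars s - D) (Imp (realize_fm (D \<union> cond_vars s)) (cond_fm s f))"

lemma basic_transform_syntax:
  assumes s: "is_basic_cond kr ar s" and D: "small kr D"
  shows "wf kr ar (orbits kr G) (basic_transform s f D) \<and> fv (basic_transform s f D) \<subseteq> D"
proof
  let ?E = "cond_vars s"
  have E: "small kr ?E" using small_cond_vars[OF s] .
  have DE: "small kr (D \<union> ?E)" using small_Un[OF D E] .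
  have "small kr (?E - D)" by (rule small_subset[OF E]) blast
  thus "wf kr ar (orbits kr G) (basic_transform s f D)"
    unfolding basic_transform_def wf_All
    using wf_Imp[OF wf_realize_fm[OF DE] wf_cond_fm[OF s]] by blast
  have "fv (Imp (realize_fm (D \<union> ?E)) (cond_fm s f)) \<subseteq> D \<union> ?E"
    using fv_Imp[of "realize_fm (D \<union> ?E)" "cond_fm s f"] fv_realize_fm[OF DE] fv_cond_fm[of s f]
    by blast
  thus "fv (basic_transform s f D) \<subseteq> D" unfolding basic_transform_def fv_All by blast
qed

lemma vaught_basic:
  fixes ar :: "'s \<Rightarrow> nat"
  assumes s: "is_basic_cond kr ar s" and f: "dom s \<subseteq> range f"
  shows "vaught_transform ar (basic_open ar s) (basic_transform s f)"
proof (rule vaught_transformI)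
  fix D :: "'k set" assume "small kr D"
  thus "wf kr ar (orbits kr G) (basic_transform s f D)" "fv (basic_transform s f D) \<subseteq> D"
    using basic_transform_syntax[OF s] by auto
next
  let ?E = "cond_vars s"
  have E: "small kr ?E" using small_cond_vars[OF s] .
  fix M :: "('s, 'k) tstruct" and D :: "'k set" and e :: "'k \<Rightarrow> 'k"
  assume M: "M \<in> Xtau ar" and D: "small kr D"
  have DE: "small kr (D \<union> ?E)" using small_Un[OF D E] .
  define Q where "Q = (\<lambda>e'. realizable (D \<union> ?E) e' \<longrightarrow> holds_cond M s e')"
  have Q_cong: "Q e1 = Q e2" if "\<And>x. x \<in> D \<union> ?E \<Longrightarrow> e1 x = e2 x" for e1 e2
    using realizable_cong[of "D \<union> ?E" e1 e2] holds_cond_cong[of s e1 e2 M] that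
    unfolding Q_def by simp
  have "sat M e (basic_transform s f D) \<longleftrightarrow> (\<forall>e'. (\<forall>v. v \<notin> ?E - D \<longrightarrow> e' v = e v) \<longrightarrow> Q e')"
    unfolding basic_transform_def sat_All sat_Imp[OF exists_other] sat_realize_fm[OF DE]
      sat_cond_fm[OF f] Q_def ..
  also have "\<dots> \<longleftrightarrow> (\<forall>e'. (\<forall>x\<in>D. e' x = e x) \<longrightarrow> Q e')"
    by (rule all_variants_iff[OF Q_cong])
  also have "\<dots> \<longleftrightarrow> comeager (nbhdG D e) {g \<in> G. holds_cond M s g}"
    unfolding Q_def by (rule comeager_local_iff[OF D E holds_cond_cong, symmetric])
  also have "\<dots> \<longleftrightarrow> comeager (nbhdG D e) (hit_set M (basic_open ar s))"
    unfolding hit_set_basic[OF M] ..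
  finally show "sat M e (basic_transform s f D) \<longleftrightarrow> comeager (nbhdG D e) (hit_set M (basic_open ar s))" .
qed

text \<open>Complements: Phi' D says that for every small set A and every realizable extension of
  the assignment to A, the transform of B fails; by the key lemma comeager_compl_iff this
  expresses comeagerness of the complement.  The small sets A are enumerated by kappa.\<close>
definition compl_transform :: "('k set \<Rightarrow> ('s, 'k, 'k) fm) \<Rightarrow> 'k set \<Rightarrow> ('s, 'k, 'k) fm" where
  "compl_transform \<Phi> D = Conj (\<lambda>i. All (small_set i - D)
     (Imp (realize_fm (D \<union> small_set i)) (Neg (\<Phi> (D \<union> small_set i)))))"

lemma compl_transform_syntax:
  assumes \<Phi>: "vaught_transform ar B \<Phi>" and D: "small kr D"
  shows "wf kr ar (orbits kr G) (compl_transform \<Phi> D) \<and> fv (compl_transform \<Phi> D) \<subseteq> D"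
proof
  have DR: "small kr (D \<union> small_set i)" for i using small_Un[OF D small_set_small] .
  have "wf kr ar (orbits kr G) (Imp (realize_fm (D \<union> small_set i)) (Neg (\<Phi> (D \<union> small_set i))))"
    for i using vaught_transform_wf[OF \<Phi> DR[of i]] by (intro wf_Imp wf_realize_fm DR) simp_all
  moreover have "small kr (small_set i - D)" for i by (rule small_subset[OF small_set_small]) blast
  ultimately show "wf kr ar (orbits kr G) (compl_transform \<Phi> D)"
    unfolding compl_transform_def by (simp add: wf_All)
  have "fv (Imp (realize_fm (D \<union> small_set i)) (Neg (\<Phi> (D \<union> small_set i)))) \<subseteq> D \<union> small_set i"
    for i using fv_Imp[of "realize_fm (D \<union> small_set i)" "Neg (\<Phi> (D \<union> small_set i))"]
      fv_realize_fm[OF DR[of i]] vaught_transform_wf[OF \<Phi> DR[of i]] by auto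
  hence "fv (All (small_set i - D) (Imp (realize_fm (D \<union> small_set i)) (Neg (\<Phi> (D \<union> small_set i)))))
      \<subseteq> D" for i unfolding fv_All by blast
  thus "fv (compl_transform \<Phi> D) \<subseteq> D" unfolding compl_transform_def by (simp add: UN_least)
qed

lemma vaught_compl:
  fixes ar :: "'s \<Rightarrow> nat"
  assumes B: "B \<in> kBorel kr ar" and \<Phi>: "vaught_transform ar B \<Phi>"
  shows "vaught_transform ar (Xtau ar - B) (compl_transform \<Phi>)"
proof (rule vaught_transformI)
  fix D :: "'k set" assume "small kr D"
  thus "wf kr ar (orbits kr G) (compl_transform \<Phi> D)" "fv (compl_transform \<Phi> D) \<subseteq> D"
    using compl_transform_syntax[OF \<Phi>] by auto
next
  fix M :: "('s, 'k) tstruct" and D :: "'k set" and e :: "'k \<Rightarrow> 'k"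
  assume M: "M \<in> Xtau ar" and D: "small kr D"
  have DR: "small kr (D \<union> small_set i)" for i using small_Un[OF D small_set_small] .
  define Q where "Q = (\<lambda>A e'. realizable (D \<union> A) e' \<longrightarrow> \<not> comeager (nbhdG (D \<union> A) e') (hit_set M B))"
  have Q_cong: "Q A e1 = Q A e2" if "\<And>x. x \<in> D \<union> A \<Longrightarrow> e1 x = e2 x" for A e1 e2
    using realizable_cong[of "D \<union> A" e1 e2] nbhdG_cong[of "D \<union> A" e1 e2] that
    unfolding Q_def by simp
  have Q_sat: "Q (small_set i) e' \<longleftrightarrow>
      (realizable (D \<union> small_set i) e' \<longrightarrow> \<not> sat M e' (\<Phi> (D \<union> small_set i)))" for i e'
    unfolding Q_def using vaught_transform_sat[OF \<Phi> M DR] by blast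
  have "sat M e (compl_transform \<Phi> D) \<longleftrightarrow>
      (\<forall>i e'. (\<forall>v. v \<notin> small_set i - D \<longrightarrow> e' v = e v) \<longrightarrow> Q (small_set i) e')"
    unfolding compl_transform_def sat.simps sat_All sat_Imp[OF exists_other] sat_realize_fm[OF DR] Q_sat ..
  also have "\<dots> \<longleftrightarrow> (\<forall>i e'. (\<forall>x\<in>D. e' x = e x) \<longrightarrow> Q (small_set i) e')"
    by (simp only: all_variants_iff[OF Q_cong])
  also have "\<dots> \<longleftrightarrow> (\<forall>A. small kr A \<longrightarrow> (\<forall>e'. (\<forall>x\<in>D. e' x = e x) \<longrightarrow> Q A e'))"
    by (rule all_small_set_iff[of "\<lambda>A. \<forall>e'. (\<forall>x\<in>D. e' x = e x) \<longrightarrow> Q A e'"])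
  also have "\<dots> \<longleftrightarrow> comeager (nbhdG D e) (G - hit_set M B)"
    unfolding Q_def by (rule comeager_compl_iff[OF BP_hit_set[OF B M] D, symmetric])
  also have "\<dots> \<longleftrightarrow> comeager (nbhdG D e) (hit_set M (Xtau ar - B))"
    unfolding hit_set_compl[OF M] ..
  finally show "sat M e (compl_transform \<Phi> D) \<longleftrightarrow> comeager (nbhdG D e) (hit_set M (Xtau ar - B))" .
qed

lemma vaught_inter:
  fixes ar :: "'s \<Rightarrow> nat" and F :: "'k \<Rightarrow> ('s, 'k) tstruct set"
  assumes \<Phi>: "\<And>i. vaught_transform ar (F i) (\<Phi>s i)"
  shows "vaught_transform ar (Xtau ar \<inter> (\<Inter>i. F i)) (\<lambda>D. Conj (\<lambda>i. \<Phi>s i D))"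
proof (rule vaught_transformI)
  {
    fix D :: "'k set" assume D: "small kr D"
    show "wf kr ar (orbits kr G) (Conj (\<lambda>i. \<Phi>s i D))" using vaught_transform_wf[OF \<Phi> D] by simp
    show "fv (Conj (\<lambda>i. \<Phi>s i D)) \<subseteq> D" using vaught_transform_wf[OF \<Phi> D] by (simp add: UN_least)
  }
  fix M :: "('s, 'k) tstruct" and D :: "'k set" and e :: "'k \<Rightarrow> 'k"
  assume M: "M \<in> Xtau ar" and D: "small kr D" and re: "realizable D e"
  let ?N = "nbhdG D e"
  have "sat M e (Conj (\<lambda>i. \<Phi>s i D)) \<longleftrightarrow> (\<forall>i. comeager ?N (hit_set M (F i)))"
    using vaught_transform_sat[OF \<Phi> M D re] by simp
  also have "\<dots> \<longleftrightarrow> comeager ?N (G \<inter> (\<Inter>i. hit_set M (F i)))"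
  proof
    assume "\<forall>i. comeager ?N (hit_set M (F i))"
    hence "comeager ?N (\<Inter>i. hit_set M (F i))" by (intro comeager_INT) simp
    thus "comeager ?N (G \<inter> (\<Inter>i. hit_set M (F i)))"
      by (rule comeager_Int[OF comeager_subset[OF nbhdG_subset_G]])
  next
    assume C: "comeager ?N (G \<inter> (\<Inter>i. hit_set M (F i)))"
    show "\<forall>i. comeager ?N (hit_set M (F i))"
    proof
      fix i have "G \<inter> (\<Inter>i. hit_set M (F i)) \<subseteq> hit_set M (F i)" by blast
      thus "comeager ?N (hit_set M (F i))" using comeager_mono[OF C order_refl] by blast
    qed
  qed
  also have "\<dots> \<longleftrightarrow> comeager ?N (hit_set M (Xtau ar \<inter> (\<Inter>i. F i)))"
    unfolding hit_set_INT[OF M] ..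
  finally show "sat M e (Conj (\<lambda>i. \<Phi>s i D)) \<longleftrightarrow> comeager ?N (hit_set M (Xtau ar \<inter> (\<Inter>i. F i)))" .
qed

lemma vaught_INT:
  fixes ar :: "'s \<Rightarrow> nat" and F :: "'k \<Rightarrow> ('s, 'k) tstruct set"
  assumes "\<And>i. \<exists>\<Phi>. vaught_transform ar (F i) \<Phi>"
  shows "\<exists>\<Phi>. vaught_transform ar (Xtau ar \<inter> (\<Inter>i. F i)) \<Phi>"
proof -
  have "\<forall>i. \<exists>\<Phi>. vaught_transform ar (F i) \<Phi>" using assms by blast
  from choice[OF this] obtain \<Phi>s where "\<forall>i. vaught_transform ar (F i) (\<Phi>s i)" by blast
  hence "vaught_transform ar (Xtau ar \<inter> (\<Inter>i. F i)) (\<lambda>D. Conj (\<lambda>i. \<Phi>s i D))"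
    by (intro vaught_inter) simp
  thus ?thesis by blast
qed

text \<open>Unions of length kappa, by De Morgan's laws.\<close>
lemma vaught_UN:
  fixes ar :: "'s \<Rightarrow> nat" and F :: "'k \<Rightarrow> ('s, 'k) tstruct set"
  assumes F: "\<And>i. F i \<in> kBorel kr ar" and \<Phi>: "\<And>i. \<exists>\<Phi>. vaught_transform ar (F i) \<Phi>"
  shows "\<exists>\<Phi>. vaught_transform ar (\<Union>i. F i) \<Phi>"
proof -
  have "(\<Union>i. F i) = Xtau ar - (Xtau ar \<inter> (\<Inter>i. Xtau ar - F i))"
    using kBorel_subset[OF F] by blast
  moreover have "Xtau ar \<inter> (\<Inter>i. Xtau ar - F i) \<in> kBorel kr ar"
    by (rule kBorel.inter, rule kBorel.compl, rule F)
  moreover have "\<exists>\<Phi>. vaught_transform ar (Xtau ar \<inter> (\<Inter>i. Xtau ar - F i)) \<Phi>"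
    using vaught_INT vaught_compl[OF F] \<Phi> by metis
  ultimately show ?thesis using vaught_compl by metis
qed

lemma vaught_exists:
  fixes ar :: "'s \<Rightarrow> nat"
  shows "B \<in> kBorel kr ar \<Longrightarrow> \<exists>\<Phi>. vaught_transform ar B \<Phi>"
proof (induction rule: kBorel.induct)
  case (basic s)
  obtain f :: "'k \<Rightarrow> 's \<times> 'k list" where "dom s \<subseteq> range f"
    using small_surj basic unfolding is_basic_cond_def by blast
  thus ?case using vaught_basic[OF basic] by blast
next
  case (compl A) thus ?case using vaught_compl by blast
next
  case (union F) show ?case by (rule vaught_UN[OF union.hyps union.IH])
next
  case (inter F) show ?case by (rule vaught_INT[OF inter.IH])
qed

lemma hit_set_invariant:
  assumes "invariant G A" shows "hit_set M A = (if M \<in> A then G else {})"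
proof -
  have "act (inv g) M \<in> A \<longleftrightarrow> M \<in> A" if "g \<in> G" for g
    using invariant_act_iff[OF subgroup assms subgroup_inv[OF subgroup that]] .
  thus ?thesis unfolding hit_set_def by auto
qed

theorem kBorel_invariant_imp_definable:
  fixes ar :: "'s \<Rightarrow> nat"
  assumes AB: "A \<in> kBorel kr ar" and inv: "invariant G A"
  shows "definable kr ar (orbits kr G) A"
proof -
  obtain \<Phi> where \<Phi>: "vaught_transform ar A \<Phi>" using vaught_exists[OF AB] by blast
  have s0: "small kr {}" by (rule small_finite[OF finite.emptyI])
  have "sentence kr ar (orbits kr G) (\<Phi> {})"
    using vaught_transform_wf[OF \<Phi> s0] unfolding sentence_def by blast
  moreover have "M \<in> A \<longleftrightarrow> models M (\<Phi> {})" if M: "M \<in> Xtau ar" for M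
  proof -
    have "models M (\<Phi> {}) \<longleftrightarrow> comeager G (hit_set M A)"
      unfolding models_def using vaught_transform_sat[OF \<Phi> M s0 realizable_empty]
      by (simp add: nbhdG_empty)
    moreover have "\<not> comeager G {}"
      using not_comeager_empty[OF s0 realizable_empty[of id]] by (simp add: nbhdG_empty)
    ultimately show ?thesis
      using comeager_subset[of G G] hit_set_invariant[OF inv] by auto
  qed
  ultimately show ?thesis unfolding definable_def by blast
qed

end

theorem proposition25:
  fixes kr :: "'k rel" and ar :: "'s \<Rightarrow> nat" and G :: "('k \<Rightarrow> 'k) set"
  assumes "card_order kr"
    and "(natLeq, kr) \<in> ordLess"
    and "(card_of (kseqs kr :: ('k \<rightharpoonup> 'k) set), kr) \<in> ordIso"
    and "(card_of (UNIV :: 's set), kr) \<in> ordLeq"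
    and "subgroup_Sk G" and "closed_Sk kr G" and "kappa_Baire kr G"
    and "A \<subseteq> Xtau ar"
  shows "(A \<in> kBorel kr ar \<and> invariant G A) \<longleftrightarrow> definable kr ar (orbits kr G) A"
proof -
  interpret Vaught_setting kr G
    by unfold_locales (use assms in auto)
  show ?thesis
  proof
    assume "A \<in> kBorel kr ar \<and> invariant G A"
    thus "definable kr ar (orbits kr G) A" using kBorel_invariant_imp_definable by blast
  next
    assume "definable kr ar (orbits kr G) A"
    thus "A \<in> kBorel kr ar \<and> invariant G A"
      using definable_imp_kBorel_invariant[OF assms(5) _ assms(8)] by blast
  qed
qed

end
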